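(* Let $U$ be a regular region, let $\phi_h\in\Lambda^k_h$ be a solution of the localized discrete Euler--Lagrange equations on $U$, i.e. $dS_U[\phi_h]\cdot v=0$ for all admissible variations $v$ with respect to $U$, and let $V,W\in\mathfrak{X}(\Lambda^k_h)$ be first variations at $\phi_h$. Then $$d\Theta^h_U(\phi_h)\cdot(V,W)=0,$$ where $d$ is the exterior derivative on the finite-dimensional vector space $\Lambda^k_h$.
   Context: $X$ is a bounded $(n+1)$-dimensional polyhedral domain with a metric and finite element triangulation $\mathcal{T}_h$; $H\Lambda^m(X)$: square-integrable $m$-forms with square-integrable exterior derivative. A Lagrangian density $\mathcal{L}$ assigns to $(x,\phi,\psi)$, $\phi\in H\Lambda^k,\psi\in dH\Lambda^k$, an $(n+1)$-form; $j^1\phi=(x,\phi,d\phi)$; $S_U[\phi]=\int_U\mathcal{L}(j^1\phi)$. $\Lambda^k_h\subset H\Lambda^k$ is a finite element space (part of a subcomplex with cochain projections $\pi_h d=d\pi_h$) with a basis of locally supported shape functions associated to mesh nodes; $\mathring{\Lambda}^k_h$: elements with vanishing trace on $\partial X$. A node $i$ is interior to a region $U$ if $U$ contains all simplices touching $i$; $U$ is regular if it equals the union of all simplices touching its interior nodes; admissible variations w.r.t. regular $U$ are $v\in\mathring{\Lambda}^k_h$ with $v|_U$ having vanishing trace on $\partial U$. For $v\in\Lambda^k_h$ restricted to $U$, $v_\partial$ is the part of its expansion in the shape functions having nonzero trace on $\partial U$ and $v_{in}=v-v_\partial$. Vector fields $V\in\mathfrak{X}(\Lambda^k_h)$ are identified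 with maps $\Lambda^k_h\to\Lambda^k_h$, and $V_\partial(\phi):=(V(\phi))_\partial$. The discrete Cartan one-form on $\Lambda^k_h$ is $\Theta^h_U(\phi)\cdot V:=dS_U[\phi]\cdot V_\partial$. A first variation at $\phi_h$ is a vector field $B$ on $\Lambda^k_h$ whose flow preserves the discrete Euler--Lagrange equations, i.e. $d\big(dS_U[\cdot]\cdot A\big)(\phi_h)\cdot B=0$ for every vector field $A$ on $\Lambda^k_h$ taking values in the admissible variations with respect to $U$. *)

theory Defs
  imports "HOL-Analysis.Analysis"
begin

text \<open>The finite element space Lambda^k_h is modelled by a
finite-dimensional real vector space type 'v (euclidean_space).  Bs is the basis of
locally supported shape functions.  trU v is the trace on the boundary of U of the
restriction of v to U, trX v is the trace of v on the boundary of X, resU v is the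
restriction of v to U.\<close>

fun iter_dd :: "('a::real_normed_vector \<Rightarrow> 'b::real_normed_vector) \<Rightarrow> 'a list \<Rightarrow> 'a \<Rightarrow> 'b" where
  "iter_dd f [] = f"
| "iter_dd f (v # vs) = (\<lambda>x. frechet_derivative (iter_dd f vs) (at x) v)"

definition smooth_map :: "('a::real_normed_vector \<Rightarrow> 'b::real_normed_vector) \<Rightarrow> bool" where
  "smooth_map f \<longleftrightarrow> (\<forall>vs x. iter_dd f vs differentiable (at x))"

definition dS :: "('v::real_normed_vector \<Rightarrow> real) \<Rightarrow> 'v \<Rightarrow> 'v \<Rightarrow> real" where
  "dS S \<phi> v = frechet_derivative S (at \<phi>) v"

definition bdry_part :: "'v::euclidean_space set \<Rightarrow> ('v \<Rightarrow> 'w::real_vector) \<Rightarrow> 'v \<Rightarrow> 'v" where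
  "bdry_part Bs trU v =
     (\<Sum>b\<in>{b\<in>Bs. trU b \<noteq> 0}. real_vector.representation Bs v b *\<^sub>R b)"

definition int_part :: "'v::euclidean_space set \<Rightarrow> ('v \<Rightarrow> 'w::real_vector) \<Rightarrow> 'v \<Rightarrow> 'v" where
  "int_part Bs trU v = v - bdry_part Bs trU v"

definition admissible :: "('v \<Rightarrow> 'w::real_vector) \<Rightarrow> ('v \<Rightarrow> 'x::real_vector) \<Rightarrow> 'v \<Rightarrow> bool" where
  "admissible trU trX v \<longleftrightarrow> trX v = 0 \<and> trU v = 0"

text \<open>Regularity of U, in the abstract form it takes on the finite element space:
the interior part of any element agrees on U with an admissible variation
(U is the union of the simplices touching its interior nodes).\<close>
definition regular_region ::
  "'v::euclidean_space set \<Rightarrow> ('v \<Rightarrow> 'w::real_vector) \<Rightarrow> ('v \<Rightarrow> 'x::real_vector)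
     \<Rightarrow> ('v \<Rightarrow> 'r) \<Rightarrow> bool" where
  "regular_region Bs trU trX resU \<longleftrightarrow>
     (\<forall>v. \<exists>w. admissible trU trX w \<and> resU w = resU (int_part Bs trU v))"

definition cartan :: "'v::euclidean_space set \<Rightarrow> ('v \<Rightarrow> 'w::real_vector) \<Rightarrow> ('v \<Rightarrow> real)
     \<Rightarrow> 'v \<Rightarrow> 'v \<Rightarrow> real" where
  "cartan Bs trU S \<phi> X = dS S \<phi> (bdry_part Bs trU X)"

definition ext_d1 :: "('v::real_normed_vector \<Rightarrow> 'v \<Rightarrow> real) \<Rightarrow> 'v \<Rightarrow> 'v \<Rightarrow> 'v \<Rightarrow> real" where
  "ext_d1 \<alpha> \<phi> X Y =
     frechet_derivative (\<lambda>\<psi>. \<alpha> \<psi> Y) (at \<phi>) X - frechet_derivative (\<lambda>\<psi>. \<alpha> \<psi> X) (at \<phi>) Y"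

definition first_variation :: "('v \<Rightarrow> 'w::real_vector) \<Rightarrow> ('v \<Rightarrow> 'x::real_vector)
     \<Rightarrow> ('v::euclidean_space \<Rightarrow> real) \<Rightarrow> 'v \<Rightarrow> ('v \<Rightarrow> 'v) \<Rightarrow> bool" where
  "first_variation trU trX S \<phi>h B \<longleftrightarrow> smooth_map B \<and>
     (\<forall>A. smooth_map A \<and> (\<forall>\<phi>. admissible trU trX (A \<phi>)) \<longrightarrow>
        frechet_derivative (\<lambda>\<phi>. dS S \<phi> (A \<phi>)) (at \<phi>h) (B \<phi>h) = 0)"

end

theory Submission
  imports Defs
begin

text \<open>The Cartan form pairs the differential of S with the boundary part of a vector, so
  \<open>d\<Theta>(V, W)\<close> is the antisymmetrised Hessian \<open>D\<^sup>2S(W\<^sub>\<partial>, V) - D\<^sup>2S(V\<^sub>\<partial>, W)\<close>.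
  Against a first variation B the Hessian does not see the interior part \<open>Y\<^sub>i\<^sub>n\<close> of a
  vector: by regularity \<open>Y\<^sub>i\<^sub>n\<close> agrees on U with an admissible variation w, which is
  annihilated because B is a first variation, while \<open>Y\<^sub>i\<^sub>n - w\<close> vanishes on U, where S
  does not notice it.  Hence \<open>d\<Theta>(V, W) = D\<^sup>2S(W, V) - D\<^sup>2S(V, W)\<close>, which is zero by the
  symmetry of second derivatives.\<close>

lemma has_real_derivative_along_line:
  fixes f :: "'a::real_normed_vector \<Rightarrow> real"
  assumes "\<And>y. (f has_derivative f' y) (at y)"
  shows "((\<lambda>s. f (p + s *\<^sub>R q)) has_real_derivative f' (p + s *\<^sub>R q) q) (at s)"
proof -
  have line: "((\<lambda>s. p + s *\<^sub>R q) has_derivative (\<lambda>h. h *\<^sub>R q)) (at s)"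
    by (auto intro!: derivative_eq_intros)
  have "((\<lambda>s. f (p + s *\<^sub>R q)) has_derivative (\<lambda>h. f' (p + s *\<^sub>R q) (h *\<^sub>R q))) (at s)"
    using has_derivative_compose[OF line assms] by (simp add: o_def)
  moreover have "(\<lambda>h. f' (p + s *\<^sub>R q) (h *\<^sub>R q)) = (*) (f' (p + s *\<^sub>R q) q)"
    using has_derivative_linear[OF assms[of "p + s *\<^sub>R q"]]
    by (simp add: linear_scale fun_eq_iff mult.commute)
  ultimately show ?thesis by (simp add: has_field_derivative_def)
qed

definition second_difference :: "('a::real_vector \<Rightarrow> real) \<Rightarrow> 'a \<Rightarrow> 'a \<Rightarrow> 'a \<Rightarrow> real \<Rightarrow> real" where
  "second_difference S x u v h = S (x + h *\<^sub>R u + h *\<^sub>R v) - S (x + h *\<^sub>R u) - S (x + h *\<^sub>R v) + S x"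

lemma second_difference_commute: "second_difference S x u v h = second_difference S x v u h"
  unfolding second_difference_def by (simp add: add_ac)

lemma second_difference_mean_value:
  fixes S :: "'a::real_normed_vector \<Rightarrow> real"
  assumes D: "\<And>y. (S has_derivative D y) (at y)"
    and D2: "\<And>y a. ((\<lambda>z. D z a) has_derivative D2 y a) (at y)"
    and h: "0 < h"
  shows "\<exists>\<sigma> \<tau>. 0 < \<sigma> \<and> \<sigma> < h \<and> 0 < \<tau> \<and> \<tau> < h \<and>
    second_difference S x u v h = h * h * D2 (x + \<sigma> *\<^sub>R u + \<tau> *\<^sub>R v) u v"
proof -
  define k where "k s = S (x + h *\<^sub>R v + s *\<^sub>R u) - S (x + s *\<^sub>R u)" for s
  have dk: "DERIV k s :> D (x + h *\<^sub>R v + s *\<^sub>R u) u - D (x + s *\<^sub>R u) u" for s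
    unfolding k_def by (intro DERIV_diff has_real_derivative_along_line[where f=S, OF D])
  obtain \<sigma> where \<sigma>: "0 < \<sigma>" "\<sigma> < h"
    "k h - k 0 = (h - 0) * (D (x + h *\<^sub>R v + \<sigma> *\<^sub>R u) u - D (x + \<sigma> *\<^sub>R u) u)"
    using MVT2[OF h dk] by blast
  define g where "g t = D (x + \<sigma> *\<^sub>R u + t *\<^sub>R v) u" for t
  have dg: "DERIV g t :> D2 (x + \<sigma> *\<^sub>R u + t *\<^sub>R v) u v" for t
    unfolding g_def by (rule has_real_derivative_along_line[where f="\<lambda>z. D z u", OF D2])
  obtain \<tau> where \<tau>: "0 < \<tau>" "\<tau> < h"
    "g h - g 0 = (h - 0) * D2 (x + \<sigma> *\<^sub>R u + \<tau> *\<^sub>R v) u v"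
    using MVT2[OF h dg] by blast
  have "second_difference S x u v h = k h - k 0"
    unfolding second_difference_def k_def by (simp add: algebra_simps)
  also have "\<dots> = h * (g h - g 0)"
    using \<sigma>(3) unfolding g_def by (simp add: algebra_simps)
  also have "\<dots> = h * h * D2 (x + \<sigma> *\<^sub>R u + \<tau> *\<^sub>R v) u v"
    using \<tau>(3) by simp
  finally show ?thesis using \<sigma> \<tau> by blast
qed

lemma second_difference_quotient_tendsto:
  fixes S :: "'a::real_normed_vector \<Rightarrow> real"
  assumes D: "\<And>y. (S has_derivative D y) (at y)"
    and D2: "\<And>y a. ((\<lambda>z. D z a) has_derivative D2 y a) (at y)"
    and cont: "isCont (\<lambda>y. D2 y u v) x"
  shows "((\<lambda>h. second_difference S x u v h / (h * h)) \<longlongrightarrow> D2 x u v) (at_right 0)"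
proof -
  have "\<forall>h. \<exists>\<sigma>. \<exists>\<tau>. 0 < h \<longrightarrow> 0 < \<sigma> \<and> \<sigma> < h \<and> 0 < \<tau> \<and> \<tau> < h \<and>
      second_difference S x u v h = h * h * D2 (x + \<sigma> *\<^sub>R u + \<tau> *\<^sub>R v) u v"
    using second_difference_mean_value[OF D D2] by blast
  then obtain \<sigma> \<tau> where \<sigma>\<tau>: "\<And>h. 0 < h \<Longrightarrow> 0 < \<sigma> h \<and> \<sigma> h < h \<and> 0 < \<tau> h \<and> \<tau> h < h \<and>
      second_difference S x u v h = h * h * D2 (x + \<sigma> h *\<^sub>R u + \<tau> h *\<^sub>R v) u v"
    unfolding choice_iff by blast
  have squeeze: "(f \<longlongrightarrow> 0) (at_right 0)" if "\<And>h. 0 < h \<Longrightarrow> 0 < f h \<and> f h < h"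
    for f :: "real \<Rightarrow> real"
  proof (rule real_tendsto_sandwich[where f="\<lambda>_. 0" and h="\<lambda>h. h"])
    show "\<forall>\<^sub>F h in at_right 0. 0 \<le> f h" "\<forall>\<^sub>F h in at_right 0. f h \<le> h"
      using eventually_at_right_less by (eventually_elim, use that in force)+
  qed (auto intro: tendsto_ident_at)
  have "(\<sigma> \<longlongrightarrow> 0) (at_right 0)" "(\<tau> \<longlongrightarrow> 0) (at_right 0)"
    using \<sigma>\<tau> by (auto intro: squeeze)
  then have "((\<lambda>h. x + \<sigma> h *\<^sub>R u + \<tau> h *\<^sub>R v) \<longlongrightarrow> x + 0 *\<^sub>R u + 0 *\<^sub>R v) (at_right 0)"
    by (intro tendsto_intros)
  then have "((\<lambda>h. x + \<sigma> h *\<^sub>R u + \<tau> h *\<^sub>R v) \<longlongrightarrow> x) (at_right 0)"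
    by simp
  then have "((\<lambda>h. D2 (x + \<sigma> h *\<^sub>R u + \<tau> h *\<^sub>R v) u v) \<longlongrightarrow> D2 x u v) (at_right 0)"
    by (rule isCont_tendsto_compose[OF cont])
  moreover have "\<forall>\<^sub>F h in at_right 0. D2 (x + \<sigma> h *\<^sub>R u + \<tau> h *\<^sub>R v) u v
      = second_difference S x u v h / (h * h)"
    using eventually_at_right_less by eventually_elim (simp add: \<sigma>\<tau>)
  ultimately show ?thesis by (rule Lim_transform_eventually)
qed

theorem second_derivative_symmetric:
  fixes S :: "'a::real_normed_vector \<Rightarrow> real"
  assumes D: "\<And>y. (S has_derivative D y) (at y)"
    and D2: "\<And>y a. ((\<lambda>z. D z a) has_derivative D2 y a) (at y)"
    and "isCont (\<lambda>y. D2 y u v) x" "isCont (\<lambda>y. D2 y v u) x"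
  shows "D2 x u v = D2 x v u"
proof (rule tendsto_unique[OF trivial_limit_at_right_real])
  show "((\<lambda>h. second_difference S x u v h / (h * h)) \<longlongrightarrow> D2 x u v) (at_right 0)"
    using second_difference_quotient_tendsto[OF D D2 assms(3)] .
  show "((\<lambda>h. second_difference S x u v h / (h * h)) \<longlongrightarrow> D2 x v u) (at_right 0)"
    using second_difference_quotient_tendsto[OF D D2 assms(4)] by (simp only: second_difference_commute)
qed

definition d2S :: "('v::real_normed_vector \<Rightarrow> real) \<Rightarrow> 'v \<Rightarrow> 'v \<Rightarrow> 'v \<Rightarrow> real" where
  "d2S S \<phi> u v = frechet_derivative (\<lambda>\<psi>. dS S \<psi> u) (at \<phi>) v"

lemma iter_dd_const: "\<exists>c. iter_dd (\<lambda>_. w) vs = (\<lambda>_. c)"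
  by (induction vs) auto

lemma smooth_map_const: "smooth_map (\<lambda>_. w)"
  unfolding smooth_map_def
proof (intro allI)
  fix vs x
  obtain c where "iter_dd (\<lambda>_. w) vs = (\<lambda>_. c)"
    using iter_dd_const by blast
  then show "iter_dd (\<lambda>_. w) vs differentiable (at x)"
    by simp
qed

context
  fixes S :: "'v::real_normed_vector \<Rightarrow> real"
  assumes smooth_S: "smooth_map S"
begin

lemma smooth_map_has_derivative_dS: "(S has_derivative dS S y) (at y)"
proof -
  have "iter_dd S [] differentiable (at y)"
    using smooth_S unfolding smooth_map_def by blast
  then show ?thesis
    unfolding dS_def by (simp add: frechet_derivative_works)
qed

lemma smooth_map_has_derivative_d2S: "((\<lambda>\<psi>. dS S \<psi> u) has_derivative d2S S y u) (at y)"
proof -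
  have "iter_dd S [u] differentiable (at y)"
    using smooth_S unfolding smooth_map_def by blast
  then show ?thesis
    unfolding d2S_def dS_def by (simp add: frechet_derivative_works)
qed

lemma smooth_map_isCont_d2S: "isCont (\<lambda>\<psi>. d2S S \<psi> u v) y"
proof -
  have "iter_dd S [v, u] differentiable (at y)"
    using smooth_S unfolding smooth_map_def by blast
  moreover have "iter_dd S [v, u] = (\<lambda>\<psi>. d2S S \<psi> u v)"
    by (simp add: d2S_def dS_def fun_eq_iff)
  ultimately show ?thesis
    using differentiable_imp_continuous_within by simp
qed

lemma d2S_commute: "d2S S \<phi> u v = d2S S \<phi> v u"
  by (rule second_derivative_symmetric[OF smooth_map_has_derivative_dS
        smooth_map_has_derivative_d2S smooth_map_isCont_d2S smooth_map_isCont_d2S])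

lemma d2S_add: "d2S S \<phi> (a + b) u = d2S S \<phi> a u + d2S S \<phi> b u"
proof -
  have "(\<lambda>\<psi>. dS S \<psi> (a + b)) = (\<lambda>\<psi>. dS S \<psi> a + dS S \<psi> b)"
    using has_derivative_linear[OF smooth_map_has_derivative_dS] by (simp add: linear_add)
  then have "((\<lambda>\<psi>. dS S \<psi> (a + b)) has_derivative (\<lambda>u. d2S S \<phi> a u + d2S S \<phi> b u)) (at \<phi>)"
    by (simp add: has_derivative_add smooth_map_has_derivative_d2S)
  from has_derivative_unique[OF smooth_map_has_derivative_d2S this] show ?thesis
    by (rule fun_cong)
qed

lemma d2S_eq_0_if_translation_invariant:
  assumes "\<And>\<psi> s. S (\<psi> + s *\<^sub>R d) = S \<psi>"
  shows "d2S S \<phi> d u = 0"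
proof -
  have "dS S \<psi> d = 0" for \<psi>
  proof -
    have "((\<lambda>s. S (\<psi> + s *\<^sub>R d)) has_real_derivative dS S (\<psi> + 0 *\<^sub>R d) d) (at 0)"
      by (rule has_real_derivative_along_line[OF smooth_map_has_derivative_dS])
    then have "((\<lambda>s. S \<psi>) has_real_derivative dS S \<psi> d) (at 0)"
      using assms by simp
    then show ?thesis
      using DERIV_const DERIV_unique by metis
  qed
  then have "((\<lambda>\<psi>. dS S \<psi> d) has_derivative (\<lambda>_. 0)) (at \<phi>)"
    by simp
  from has_derivative_unique[OF smooth_map_has_derivative_d2S this] show ?thesis
    by (rule fun_cong)
qed

end

lemma first_variation_d2S_eq_0:
  assumes "first_variation trU trX S \<phi> B" "admissible trU trX w"
  shows "d2S S \<phi> w (B \<phi>) = 0"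
proof -
  have "frechet_derivative (\<lambda>\<psi>. dS S \<psi> ((\<lambda>_. w) \<psi>)) (at \<phi>) (B \<phi>) = 0"
    using assms smooth_map_const[of w] unfolding first_variation_def by blast
  then show ?thesis
    by (simp add: d2S_def)
qed

lemma d2S_bdry_part_first_variation:
  assumes "linear resU"
    and local_S: "\<And>\<phi> \<psi>. resU \<phi> = resU \<psi> \<Longrightarrow> S \<phi> = S \<psi>"
    and smooth_S: "smooth_map S"
    and "regular_region Bs trU trX resU"
    and B: "first_variation trU trX S \<phi> B"
  shows "d2S S \<phi> (bdry_part Bs trU Y) (B \<phi>) = d2S S \<phi> Y (B \<phi>)"
proof -
  obtain w where w: "admissible trU trX w" "resU w = resU (int_part Bs trU Y)"
    using assms(4) unfolding regular_region_def by blast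
  have interior: "d2S S \<phi> (int_part Bs trU Y - w) (B \<phi>) = 0"
  proof (rule d2S_eq_0_if_translation_invariant[OF smooth_S])
    show "S (\<psi> + s *\<^sub>R (int_part Bs trU Y - w)) = S \<psi>" for \<psi> s
      using \<open>linear resU\<close> w(2) by (intro local_S) (simp add: linear_add linear_scale linear_diff)
  qed
  have "d2S S \<phi> Y (B \<phi>) = d2S S \<phi> (bdry_part Bs trU Y + (w + (int_part Bs trU Y - w))) (B \<phi>)"
    by (simp add: int_part_def)
  also have "\<dots> = d2S S \<phi> (bdry_part Bs trU Y) (B \<phi>)
      + (d2S S \<phi> w (B \<phi>) + d2S S \<phi> (int_part Bs trU Y - w) (B \<phi>))"
    by (simp only: d2S_add[OF smooth_S])
  also have "d2S S \<phi> w (B \<phi>) = 0"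
    using B w(1) by (rule first_variation_d2S_eq_0)
  finally show ?thesis
    by (simp add: interior)
qed

lemma ext_d1_cartan:
  "ext_d1 (cartan Bs trU S) \<phi> X Y = d2S S \<phi> (bdry_part Bs trU Y) X - d2S S \<phi> (bdry_part Bs trU X) Y"
  unfolding ext_d1_def cartan_def d2S_def ..

theorem mainTheorem3:
  fixes Bs :: "'v::euclidean_space set"
    and trU :: "'v \<Rightarrow> 'w::real_vector"
    and trX :: "'v \<Rightarrow> 'x::real_vector"
    and resU :: "'v \<Rightarrow> 'r::real_vector"
    and S :: "'v \<Rightarrow> real"
    and \<phi>h :: 'v
    and V W :: "'v \<Rightarrow> 'v"
  assumes basis: "independent Bs" "span Bs = UNIV"
    and lin: "linear trU" "linear trX" "linear resU"
    and local_S: "\<And>\<phi> \<psi>. resU \<phi> = resU \<psi> \<Longrightarrow> S \<phi> = S \<psi>"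
    and smooth_S: "smooth_map S"
    and regular: "regular_region Bs trU trX resU"
    and EL: "\<And>v. admissible trU trX v \<Longrightarrow> dS S \<phi>h v = 0"
    and fvV: "first_variation trU trX S \<phi>h V"
    and fvW: "first_variation trU trX S \<phi>h W"
  shows "ext_d1 (cartan Bs trU S) \<phi>h (V \<phi>h) (W \<phi>h) = 0"
proof -
  have "ext_d1 (cartan Bs trU S) \<phi>h (V \<phi>h) (W \<phi>h)
      = d2S S \<phi>h (bdry_part Bs trU (W \<phi>h)) (V \<phi>h) - d2S S \<phi>h (bdry_part Bs trU (V \<phi>h)) (W \<phi>h)"
    by (rule ext_d1_cartan)
  also have "\<dots> = d2S S \<phi>h (W \<phi>h) (V \<phi>h) - d2S S \<phi>h (V \<phi>h) (W \<phi>h)"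
    using d2S_bdry_part_first_variation[OF lin(3) local_S smooth_S regular] fvV fvW by simp
  also have "\<dots> = 0"
    using d2S_commute[OF smooth_S] by simp
  finally show ?thesis .
qed

end
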